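(* Let $(M,g,S)$ be as in the context and $u$ a tangent vector at a point of $M$. If $u$ is space-like (respectively isotropic, time-like) with respect to $\tilde g$, then $Su$, $S^2u$ and $S^3u$ are space-like (respectively isotropic, time-like).
   Context: $M$ is a 4-dimensional differentiable manifold with a positive definite metric $g$ and a tensor field $S$ of type $(1,1)$ whose components in some local coordinate system form the matrix with rows $(0,1,0,0)$, $(0,0,1,0)$, $(0,0,0,1)$, $(-1,0,0,0)$; hence $S^4=-\mathrm{id}$. It is assumed that $g(Su,Sv)=g(u,v)$ for all vector fields $u,v$. The associated metric is $\tilde g(u,v)=g(u,Sv)+g(Su,v)$. A vector $u$ is space-like if $\tilde g(u,u)>0$, time-like if $\tilde g(u,u)<0$, and isotropic if $u\neq 0$ and $\tilde g(u,u)=0$. *)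

theory Defs
  imports "HOL-Analysis.Analysis"
begin

text \<open>Everything is pointwise: the tangent space at a point is identified with real^4
  via the given local coordinates.\<close>

definition S_mat :: "real^4^4" where
  "S_mat = vector [vector [0,1,0,0], vector [0,0,1,0], vector [0,0,0,1], vector [-1,0,0,0]]"

definition S :: "real^4 \<Rightarrow> real^4" where
  "S u = S_mat *v u"

definition pos_def_metric :: "(real^4 \<Rightarrow> real^4 \<Rightarrow> real) \<Rightarrow> bool" where
  "pos_def_metric g \<longleftrightarrow> bilinear g \<and> (\<forall>u v. g u v = g v u) \<and> (\<forall>u. u \<noteq> 0 \<longrightarrow> g u u > 0)"

definition gt :: "(real^4 \<Rightarrow> real^4 \<Rightarrow> real) \<Rightarrow> real^4 \<Rightarrow> real^4 \<Rightarrow> real" where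
  "gt g u v = g u (S v) + g (S u) v"

definition space_like :: "(real^4 \<Rightarrow> real^4 \<Rightarrow> real) \<Rightarrow> real^4 \<Rightarrow> bool" where
  "space_like g u \<longleftrightarrow> gt g u u > 0"

definition time_like :: "(real^4 \<Rightarrow> real^4 \<Rightarrow> real) \<Rightarrow> real^4 \<Rightarrow> bool" where
  "time_like g u \<longleftrightarrow> gt g u u < 0"

definition isotropic :: "(real^4 \<Rightarrow> real^4 \<Rightarrow> real) \<Rightarrow> real^4 \<Rightarrow> bool" where
  "isotropic g u \<longleftrightarrow> u \<noteq> 0 \<and> gt g u u = 0"

end

theory Submission
  imports Defs
begin

text \<open>An S-invariant metric makes the associated metric S-invariant as well, so the
  causal character of u is that of S u; iterating gives the claim for S^2 u and S^3 u.
  Isotropy additionally needs S u \<noteq> 0, which holds because S is a g-isometry.\<close>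

lemma gt_S_S:
  assumes "\<forall>v w. g (S v) (S w) = g v w"
  shows "gt g (S u) (S u) = gt g u u"
  using assms unfolding gt_def by (simp add: add.commute)

lemma S_eq_0_iff:
  assumes "pos_def_metric g" and "\<forall>v w. g (S v) (S w) = g v w"
  shows "S u = 0 \<longleftrightarrow> u = 0"
proof
  assume "S u = 0"
  then have "g u u = g 0 0" using assms(2) by metis
  also have "\<dots> = 0" using assms(1) unfolding pos_def_metric_def by (simp add: bilinear_lzero)
  finally show "u = 0" using assms(1) unfolding pos_def_metric_def by force
next
  assume "u = 0"
  then show "S u = 0" unfolding S_def by simp
qed

lemma space_like_S_iff:
  assumes "\<forall>v w. g (S v) (S w) = g v w"
  shows "space_like g (S u) \<longleftrightarrow> space_like g u"
  using gt_S_S[OF assms] unfolding space_like_def by simp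

lemma time_like_S_iff:
  assumes "\<forall>v w. g (S v) (S w) = g v w"
  shows "time_like g (S u) \<longleftrightarrow> time_like g u"
  using gt_S_S[OF assms] unfolding time_like_def by simp

lemma isotropic_S_iff:
  assumes "pos_def_metric g" and "\<forall>v w. g (S v) (S w) = g v w"
  shows "isotropic g (S u) \<longleftrightarrow> isotropic g u"
  using gt_S_S[OF assms(2)] S_eq_0_iff[OF assms] unfolding isotropic_def by simp

theorem corollary2p3:
  fixes g :: "real^4 \<Rightarrow> real^4 \<Rightarrow> real" and u :: "real^4"
  assumes "pos_def_metric g"
    and "\<forall>v w. g (S v) (S w) = g v w"
  shows "(space_like g u \<longrightarrow> space_like g (S u) \<and> space_like g (S (S u)) \<and> space_like g (S (S (S u))))
       \<and> (isotropic g u \<longrightarrow> isotropic g (S u) \<and> isotropic g (S (S u)) \<and> isotropic g (S (S (S u))))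
       \<and> (time_like g u \<longrightarrow> time_like g (S u) \<and> time_like g (S (S u)) \<and> time_like g (S (S (S u))))"
  using space_like_S_iff[OF assms(2)] isotropic_S_iff[OF assms] time_like_S_iff[OF assms(2)]
  by simp

end
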